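(* Let $A=[\bm a_1,\dots,\bm a_n]$ be a $d\times n$ integer matrix of rank $d$ whose columns all lie on one affine hyperplane of $\mathbb{Q}^d$ not containing the origin, let $\bm w\in\mathbb{R}^n$ be a generic weight, let $\bm\beta\in\mathbb{C}^d$, and let $\bm v\in\mathbb{C}^n$ be a fake exponent of $H_A(\bm\beta)$ with respect to $\bm w$. If $I_{\bm 0}=\mathrm{nsupp}(\bm v)\subset C_{\bm w}$, then $I_{\bm 0}=K$.
   Context: $L=\ker_{\mathbb{Z}}A=\{\bm u\in\mathbb{Z}^n: A\bm u=\bm 0\}$. The toric ideal is $I_A=\langle \partial^{\bm u}-\partial^{\bm u'} : A\bm u=A\bm u',\ \bm u,\bm u'\in\mathbb{N}^n\rangle\subset\mathbb{C}[\partial_1,\dots,\partial_n]$ (multi-index notation). $H_A(\bm\beta)$ is the left ideal of the Weyl algebra $\mathbb{C}\langle x_1,\dots,x_n,\partial_1,\dots,\partial_n\rangle$ generated by $I_A$ and $\sum_j a_{ij}x_j\partial_j-\beta_i$ ($i=1,\dots,d$). A weight $\bm w$ is generic if the initial ideal $\mathrm{in}_{\bm w}I_A$ is a monomial ideal. Every $\bm u\in\mathbb{Z}^n$ is written uniquely as $\bm u=\bm u_+-\bm u_-$ with $\bm u_\pm\in\mathbb{N}^n$ of disjoint supports. For $\bm v\in\mathbb{C}^n$, $\bm u\in\mathbb{N}^n$, $[\bm v]_{\bm u}=\prod_j v_j(v_j-1)\cdots(v_j-u_j+1)$. A vector $\bm v$ is a fake exponent of $H_A(\bm\beta)$ with respect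 to $\bm w$ if $A\bm v=\bm\beta$ and $[\bm v]_{\bm u_+}=0$ for all $\bm u\in L$ with $\bm u_+\cdot\bm w>\bm u_-\cdot\bm w$. The negative support is $\mathrm{nsupp}(\bm v)=\{j: v_j\in\mathbb{Z}_{<0}\}$, and for $\bm u\in L$ one writes $I_{\bm u}=\mathrm{nsupp}(\bm v+\bm u)$. Let $\{\partial^{\bm g_+^{(i)}}-\partial^{\bm g_-^{(i)}}: i=1,\dots,m\}$ be the reduced Gröbner basis of $I_A$ with respect to $\bm w$, with $\partial^{\bm g_+^{(i)}}\in\mathrm{in}_{\bm w}I_A$, and put $\bm g^{(i)}=\bm g_+^{(i)}-\bm g_-^{(i)}$ and $C(\bm w)=\sum_{i=1}^m\mathbb{N}\bm g^{(i)}$. Define $\mathrm{NS}_{\bm w}(\bm v)$ as the set of those $I_{\bm u}$ ($\bm u\in L$) such that every $\bm u'\in L$ with $I_{\bm u'}=I_{\bm u}$ lies in $C(\bm w)$, and $K=\bigcap_{I\in\mathrm{NS}_{\bm w}(\bm v)}I$. A standard pair of a monomial ideal $M\subset\mathbb{C}[\bm\partial]$ is a pair $(\bm a,\sigma)$ with $\bm a\in\mathbb{N}^n$, $\sigma\subset\{1,\dots,n\}$ such that: (1) $a_i=0$ for $i\in\sigma$; (2) $\partial^{\bm a}\prod_{j\in\sigma}\partial_j^{b_j}\notin M$ for all $b_j\ge0$; (3) for every $l\notin\sigma$ there are $b_j\ge 0$ with $\partial^{\bm a}\partial_l^{b_l}\prod_{j\in\sigma}\partial_j^{b_j}\in M$.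 Let $\Delta_{\bm w}=\{\sigma : (\bm a,\sigma)\text{ a standard pair of }\mathrm{in}_{\bm w}I_A\}$ and $C_{\bm w}=\bigcap_{\sigma\in\Delta_{\bm w}}\sigma$. *)

theory Defs
  imports "HOL-Analysis.Analysis" "HOL-Library.Poly_Mapping"
begin

type_synonym 'n cpoly = "('n \<Rightarrow>\<^sub>0 nat) \<Rightarrow>\<^sub>0 complex"

definition mon :: "('n \<Rightarrow>\<^sub>0 nat) \<Rightarrow> 'n cpoly" where
  "mon a = Poly_Mapping.single a 1"

definition ideal_span :: "'n cpoly set \<Rightarrow> 'n cpoly set" where
  "ideal_span S = {(\<Sum>s\<in>F. r s * s) | F r. finite F \<and> F \<subseteq> S}"

text \<open>The matrix A acting on integer vectors (columns indexed by 'n, rows by 'd).\<close>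
definition Amul :: "int^'n^'d \<Rightarrow> ('n::finite \<Rightarrow> int) \<Rightarrow> ('d::finite \<Rightarrow> int)" where
  "Amul A u = (\<lambda>i. \<Sum>j\<in>UNIV. A$i$j * u j)"

definition natvec :: "('n \<Rightarrow>\<^sub>0 nat) \<Rightarrow> ('n \<Rightarrow> int)" where
  "natvec a = (\<lambda>j. int (Poly_Mapping.lookup a j))"

definition lattice :: "int^'n^'d \<Rightarrow> ('n::finite \<Rightarrow> int) set" where
  "lattice A = {u. Amul A u = (\<lambda>_. 0)}"

definition toric_ideal :: "int^'n^'d \<Rightarrow> ('n::finite) cpoly set" where
  "toric_ideal A = ideal_span {mon u - mon u' | u u'. Amul A (natvec u) = Amul A (natvec u')}"

definition wt :: "('n::finite \<Rightarrow> real) \<Rightarrow> ('n \<Rightarrow>\<^sub>0 nat) \<Rightarrow> real" where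
  "wt w a = (\<Sum>j\<in>UNIV. w j * real (Poly_Mapping.lookup a j))"

definition init_form :: "('n::finite \<Rightarrow> real) \<Rightarrow> 'n cpoly \<Rightarrow> 'n cpoly" where
  "init_form w f =
     (let m = Max (wt w ` Poly_Mapping.keys f)
      in (\<Sum>u\<in>{u\<in>Poly_Mapping.keys f. wt w u = m}. Poly_Mapping.single u (Poly_Mapping.lookup f u)))"

definition init_ideal :: "('n::finite \<Rightarrow> real) \<Rightarrow> 'n cpoly set \<Rightarrow> 'n cpoly set" where
  "init_ideal w I = ideal_span (init_form w ` I)"

definition monomial_ideal :: "'n cpoly set \<Rightarrow> bool" where
  "monomial_ideal M \<longleftrightarrow> (\<exists>S. M = ideal_span (mon ` S))"

definition generic_weight :: "int^'n^'d \<Rightarrow> ('n::finite \<Rightarrow> real) \<Rightarrow> bool" where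
  "generic_weight A w \<longleftrightarrow> monomial_ideal (init_ideal w (toric_ideal A))"

definition reduced_GB :: "('n::finite \<Rightarrow> real) \<Rightarrow> 'n cpoly set \<Rightarrow> 'n cpoly set \<Rightarrow> bool" where
  "reduced_GB w I G \<longleftrightarrow>
     finite G \<and> G \<subseteq> I \<and>
     ideal_span (init_form w ` G) = init_ideal w I \<and>
     (\<forall>g\<in>G. \<exists>a. init_form w g = mon a) \<and>
     (\<forall>g\<in>G. \<forall>g'\<in>G. g \<noteq> g' \<longrightarrow> \<not> (init_form w g' dvd init_form w g)) \<and>
     (\<forall>g\<in>G. \<forall>u\<in>Poly_Mapping.keys (g - init_form w g). mon u \<notin> init_ideal w I)"

definition pos_part :: "('n \<Rightarrow> int) \<Rightarrow> ('n \<Rightarrow> int)" where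
  "pos_part u = (\<lambda>j. max (u j) 0)"

definition neg_part :: "('n \<Rightarrow> int) \<Rightarrow> ('n \<Rightarrow> int)" where
  "neg_part u = (\<lambda>j. max (- u j) 0)"

definition dotw :: "('n::finite \<Rightarrow> int) \<Rightarrow> ('n \<Rightarrow> real) \<Rightarrow> real" where
  "dotw u w = (\<Sum>j\<in>UNIV. real_of_int (u j) * w j)"

definition ffact :: "('n::finite \<Rightarrow> complex) \<Rightarrow> ('n \<Rightarrow> int) \<Rightarrow> complex" where
  "ffact v u = (\<Prod>j\<in>UNIV. \<Prod>k<nat (u j). v j - of_nat k)"

definition fake_exponent ::
  "int^'n^'d \<Rightarrow> ('d::finite \<Rightarrow> complex) \<Rightarrow> ('n::finite \<Rightarrow> real) \<Rightarrow> ('n \<Rightarrow> complex) \<Rightarrow> bool" where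
  "fake_exponent A \<beta> w v \<longleftrightarrow>
     (\<forall>i. (\<Sum>j\<in>UNIV. of_int (A$i$j) * v j) = \<beta> i) \<and>
     (\<forall>u\<in>lattice A. dotw (pos_part u) w > dotw (neg_part u) w \<longrightarrow> ffact v (pos_part u) = 0)"

definition nsupp :: "('n \<Rightarrow> complex) \<Rightarrow> 'n set" where
  "nsupp v = {j. \<exists>k::int. k < 0 \<and> v j = of_int k}"

definition Iu :: "('n \<Rightarrow> complex) \<Rightarrow> ('n \<Rightarrow> int) \<Rightarrow> 'n set" where
  "Iu v u = nsupp (\<lambda>j. v j + of_int (u j))"

definition Ccone :: "nat \<Rightarrow> (nat \<Rightarrow> ('n \<Rightarrow>\<^sub>0 nat)) \<Rightarrow> (nat \<Rightarrow> ('n \<Rightarrow>\<^sub>0 nat)) \<Rightarrow> ('n \<Rightarrow> int) set" where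
  "Ccone m gp gm = {(\<lambda>j. \<Sum>i<m. int (c i) * (natvec (gp i) j - natvec (gm i) j)) | c. True}"

definition NS :: "int^'n^'d \<Rightarrow> ('n::finite \<Rightarrow> complex) \<Rightarrow> ('n \<Rightarrow> int) set \<Rightarrow> 'n set set" where
  "NS A v C = {Iu v u | u. u \<in> lattice A \<and> (\<forall>u'\<in>lattice A. Iu v u' = Iu v u \<longrightarrow> u' \<in> C)}"

definition Kset :: "int^'n^'d \<Rightarrow> ('n::finite \<Rightarrow> complex) \<Rightarrow> ('n \<Rightarrow> int) set \<Rightarrow> 'n set" where
  "Kset A v C = \<Inter> (NS A v C)"

definition standard_pair :: "'n cpoly set \<Rightarrow> ('n \<Rightarrow>\<^sub>0 nat) \<Rightarrow> 'n set \<Rightarrow> bool" where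
  "standard_pair M a \<sigma> \<longleftrightarrow>
     (\<forall>i\<in>\<sigma>. Poly_Mapping.lookup a i = 0) \<and>
     (\<forall>b. (\<forall>j. j \<notin> \<sigma> \<longrightarrow> Poly_Mapping.lookup b j = 0) \<longrightarrow> mon (a + b) \<notin> M) \<and>
     (\<forall>l. l \<notin> \<sigma> \<longrightarrow> (\<exists>b. (\<forall>j. j \<notin> insert l \<sigma> \<longrightarrow> Poly_Mapping.lookup b j = 0) \<and> mon (a + b) \<in> M))"

definition Delta_w :: "int^'n^'d \<Rightarrow> ('n::finite \<Rightarrow> real) \<Rightarrow> 'n set set" where
  "Delta_w A w = {\<sigma>. \<exists>a. standard_pair (init_ideal w (toric_ideal A)) a \<sigma>}"

definition C_w :: "int^'n^'d \<Rightarrow> ('n::finite \<Rightarrow> real) \<Rightarrow> 'n set" where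
  "C_w A w = \<Inter> (Delta_w A w)"

end

theory Submission
  imports Defs
begin

(*
  Let u be in L with I_u = nsupp(v), and write u = u_+ - u_-. The monomial \<partial>^(u_-) is standard:
  otherwise some leading monomial \<partial>^(g_+) divides it, and the fake-exponent condition
  [v]_(g_+) = 0 gives a coordinate with v_j \<in> {0, ..., (u_-)_j - 1}, so that j lies in I_u
  but not in nsupp(v). Reducing \<partial>^(u_+) modulo the Groebner basis changes the exponent by an
  element of C(w) and ends in a standard monomial of the same A-degree; since I_A is A-graded and
  in_w(I_A) is a monomial ideal, that monomial is \<partial>^(u_-). Hence u \<in> C(w), and nsupp(v) \<in> NS_w(v).

  Conversely, no leading monomial \<partial>^(g_+) involves a variable j \<in> C_w: dividing it by \<partial>_j
  gives a standard monomial, which extends to a standard pair whose set avoids j. So every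
  element of C(w) is nonpositive on C_w \<supseteq> nsupp(v), and nsupp(v) \<subseteq> I for every I \<in> NS_w(v).
*)

lemma mon_add: "mon (a + b) = mon a * mon b"
  by (simp add: mon_def mult_single)

lemma lookup_mon: "Poly_Mapping.lookup (mon a) x = (if x = a then 1 else 0)"
  by (simp add: mon_def lookup_single when_def)

lemma keys_mon [simp]: "Poly_Mapping.keys (mon a) = {a}"
  by (simp add: mon_def)

lemma ideal_span_base: "s \<in> S \<Longrightarrow> s \<in> ideal_span S"
  unfolding ideal_span_def by (intro CollectI exI[of _ "{s}"] exI[of _ "\<lambda>_. 1"]) simp

lemma ideal_span_mult: "f \<in> ideal_span S \<Longrightarrow> q * f \<in> ideal_span S"
proof -
  assume "f \<in> ideal_span S"
  then obtain F r where F: "finite F" "F \<subseteq> S" and f: "f = (\<Sum>s\<in>F. r s * s)"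
    unfolding ideal_span_def by blast
  have "q * f = (\<Sum>s\<in>F. (q * r s) * s)"
    unfolding f by (simp add: sum_distrib_left mult.assoc)
  then show ?thesis
    unfolding ideal_span_def using F by (intro CollectI exI[of _ F] exI[of _ "\<lambda>s. q * r s"]) simp
qed

lemma mon_add_in_ideal_span: "mon a \<in> ideal_span S \<Longrightarrow> mon (b + a) \<in> ideal_span S"
  by (simp add: mon_add ideal_span_mult)

lemma keys_mult_single:
  fixes r :: "('a::cancel_comm_monoid_add) \<Rightarrow>\<^sub>0 ('b::comm_semiring_1)"
  shows "Poly_Mapping.keys (r * Poly_Mapping.single u c) \<subseteq> (\<lambda>l. l + u) ` Poly_Mapping.keys r"
  using keys_mult[of r "Poly_Mapping.single u c"] by (auto split: if_splits)

lemma keys_ideal_span_mon: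
  assumes "f \<in> ideal_span (mon ` T)" and "x \<in> Poly_Mapping.keys f"
  shows "\<exists>t\<in>T. \<exists>y. x = y + t"
proof -
  obtain F r where F: "F \<subseteq> mon ` T" and f: "f = (\<Sum>s\<in>F. r s * s)"
    using assms(1) unfolding ideal_span_def by blast
  obtain s where s: "s \<in> F" "x \<in> Poly_Mapping.keys (r s * s)"
    using assms(2) keys_sum[of "\<lambda>s. r s * s" F] unfolding f by blast
  then obtain t where "t \<in> T" "s = Poly_Mapping.single t 1"
    using F unfolding mon_def by blast
  with s keys_mult_single[of "r s" t 1] show ?thesis by blast
qed

lemma mon_in_ideal_span_mon_iff:
  "mon x \<in> ideal_span (mon ` T) \<longleftrightarrow> (\<exists>t\<in>T. \<exists>y. x = y + t)"
  using keys_ideal_span_mon[of "mon x" T x]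
  by (auto intro: mon_add_in_ideal_span ideal_span_base)

lemma mon_key_in_monomial_ideal:
  assumes "monomial_ideal M" and "f \<in> M" and "x \<in> Poly_Mapping.keys f"
  shows "mon x \<in> M"
  using assms keys_ideal_span_mon mon_in_ideal_span_mon_iff
  unfolding monomial_ideal_def by metis

lemma wt_add: "wt w (a + b) = wt w a + wt w b"
  by (simp add: wt_def lookup_add sum.distrib algebra_simps)

lemma lookup_init_form:
  "Poly_Mapping.lookup (init_form w f) x =
    (if x \<in> Poly_Mapping.keys f \<and> wt w x = Max (wt w ` Poly_Mapping.keys f)
     then Poly_Mapping.lookup f x else 0)"
  unfolding init_form_def Let_def lookup_sum lookup_single when_def
  by (simp add: eq_commute)

lemma keys_init_form_subset: "Poly_Mapping.keys (init_form w f) \<subseteq> Poly_Mapping.keys f"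
  by (auto simp: in_keys_iff lookup_init_form split: if_splits)

lemma init_form_nonzero:
  assumes "f \<noteq> 0"
  shows "init_form w f \<noteq> 0"
proof -
  have "Max (wt w ` Poly_Mapping.keys f) \<in> wt w ` Poly_Mapping.keys f"
    using assms by (intro Max_in) auto
  then obtain z where "z \<in> Poly_Mapping.keys f" "wt w z = Max (wt w ` Poly_Mapping.keys f)"
    by auto
  then have "Poly_Mapping.lookup (init_form w f) z \<noteq> 0"
    by (simp add: lookup_init_form in_keys_iff)
  then show ?thesis by auto
qed

lemma init_form_binomial_eq_mon:
  assumes "init_form w (mon a - mon b) = mon c"
  shows "c = a" and "wt w b < wt w a"
proof -
  let ?f = "mon a - mon b"
  have c: "Poly_Mapping.lookup (init_form w ?f) c = 1"
    and b: "Poly_Mapping.lookup (init_form w ?f) b = (if c = b then 1 else 0)"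
    using assms by (simp_all add: lookup_mon)
  then have ab: "a \<noteq> b" by (auto simp: init_form_def)
  have keys: "Poly_Mapping.keys ?f = {a, b}"
    using ab by (auto simp: in_keys_iff lookup_minus lookup_mon split: if_splits)
  from c b show "c = a" and "wt w b < wt w a"
    using ab by (auto simp: lookup_init_form keys lookup_minus lookup_mon split: if_splits)
qed

lemma lookup_mult_mon_add:
  "Poly_Mapping.lookup (r * mon u) (l + u) = Poly_Mapping.lookup r l"
proof -
  have "Sum_any (\<lambda>q. (1::complex) when u = q when l + u = l' + q) = (1 when l' = l)" for l'
  proof -
    have "Sum_any (\<lambda>q. (1 when u = q) when l + u = l' + q)
        = Sum_any (\<lambda>q. (1 when l' = l) when u = q)"
      by (rule arg_cong[where f = Sum_any]) (auto simp: fun_eq_iff when_def)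
    also have "\<dots> = (1 when l' = l)"
      by (rule Sum_any_when_equal')
    finally show ?thesis .
  qed
  then have "Poly_Mapping.lookup (r * mon u) (l + u)
      = Sum_any (\<lambda>l'. Poly_Mapping.lookup r l' * (1 when l' = l))"
    by (simp only: lookup_mult mon_def lookup_single)
  then show ?thesis
    by (simp add: mult_when)
qed

definition coeff_sum_of_degree :: "(('n \<Rightarrow>\<^sub>0 nat) \<Rightarrow> 'b) \<Rightarrow> 'b \<Rightarrow> 'n cpoly \<Rightarrow> complex" where
  "coeff_sum_of_degree deg b f =
     (\<Sum>x\<in>Poly_Mapping.keys f. if deg x = b then Poly_Mapping.lookup f x else 0)"

lemma coeff_sum_of_degree_superset:
  assumes "finite T" and "Poly_Mapping.keys f \<subseteq> T"
  shows "coeff_sum_of_degree deg b f = (\<Sum>x\<in>T. if deg x = b then Poly_Mapping.lookup f x else 0)"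
  unfolding coeff_sum_of_degree_def using assms
  by (intro sum.mono_neutral_left) (auto simp: in_keys_iff)

lemma coeff_sum_of_degree_add:
  "coeff_sum_of_degree deg b (f + g) = coeff_sum_of_degree deg b f + coeff_sum_of_degree deg b g"
  using keys_add[of f g]
  by (simp add: coeff_sum_of_degree_superset[of "Poly_Mapping.keys f \<union> Poly_Mapping.keys g"]
      lookup_add sum.distrib[symmetric] if_distrib[of "\<lambda>x. x + _"] cong: if_cong)

lemma coeff_sum_of_degree_diff:
  "coeff_sum_of_degree deg b (f - g) = coeff_sum_of_degree deg b f - coeff_sum_of_degree deg b g"
  using keys_diff[of f g]
  by (auto simp: coeff_sum_of_degree_superset[of "Poly_Mapping.keys f \<union> Poly_Mapping.keys g"]
      lookup_minus sum_subtractf[symmetric] intro!: sum.cong)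

lemma coeff_sum_of_degree_sum:
  "finite F \<Longrightarrow> coeff_sum_of_degree deg b (\<Sum>s\<in>F. h s) = (\<Sum>s\<in>F. coeff_sum_of_degree deg b (h s))"
  by (induction F rule: finite_induct)
    (simp add: coeff_sum_of_degree_def, simp add: coeff_sum_of_degree_add)

lemma coeff_sum_of_degree_mult_mon:
  "coeff_sum_of_degree deg b (r * mon u) = coeff_sum_of_degree (\<lambda>l. deg (l + u)) b r"
proof -
  have "coeff_sum_of_degree deg b (r * mon u) =
      (\<Sum>x\<in>(\<lambda>l. l + u) ` Poly_Mapping.keys r.
        if deg x = b then Poly_Mapping.lookup (r * mon u) x else 0)"
    by (rule coeff_sum_of_degree_superset)
      (auto simp: mon_def intro: keys_mult_single[THEN subsetD])
  also have "\<dots> = (\<Sum>l\<in>Poly_Mapping.keys r.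
      if deg (l + u) = b then Poly_Mapping.lookup (r * mon u) (l + u) else 0)"
    by (subst sum.reindex) (auto simp: inj_on_def)
  also have "\<dots> = (\<Sum>l\<in>Poly_Mapping.keys r. if deg (l + u) = b then Poly_Mapping.lookup r l else 0)"
    by (simp only: lookup_mult_mon_add)
  finally show ?thesis
    by (simp only: coeff_sum_of_degree_def)
qed

lemma coeff_sum_of_degree_ideal_span_homogeneous_binomials:
  assumes deg_congruence: "\<And>l u u'. deg u = deg u' \<Longrightarrow> deg (l + u) = deg (l + u')"
    and "f \<in> ideal_span {mon u - mon u' | u u'. deg u = deg u'}"
  shows "coeff_sum_of_degree deg b f = 0"
proof -
  obtain F r where F: "finite F" "F \<subseteq> {mon u - mon u' | u u'. deg u = deg u'}"
    and f: "f = (\<Sum>s\<in>F. r s * s)"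
    using assms(2) unfolding ideal_span_def by blast
  have "coeff_sum_of_degree deg b (r s * s) = 0" if s_in: "s \<in> F" for s
  proof -
    obtain u u' where s: "s = mon u - mon u'" and "deg u = deg u'"
      using F(2) s_in by auto
    then have "(\<lambda>l. deg (l + u)) = (\<lambda>l. deg (l + u'))"
      by (intro ext deg_congruence)
    moreover have "coeff_sum_of_degree deg b (r s * s) =
        coeff_sum_of_degree (\<lambda>l. deg (l + u)) b (r s)
        - coeff_sum_of_degree (\<lambda>l. deg (l + u')) b (r s)"
      by (simp only: s right_diff_distrib coeff_sum_of_degree_diff coeff_sum_of_degree_mult_mon)
    ultimately show ?thesis
      by (metis diff_self)
  qed
  then show ?thesis
    by (simp add: f coeff_sum_of_degree_sum F)
qed

lemma Amul_natvec_add: "Amul A (natvec (a + b)) i = Amul A (natvec a) i + Amul A (natvec b) i"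
  by (simp add: Amul_def natvec_def lookup_add sum.distrib algebra_simps)

lemma toric_binomial_Amul_eq:
  assumes "mon a - mon b \<in> toric_ideal A"
  shows "Amul A (natvec a) = Amul A (natvec b)"
proof (rule ccontr)
  let ?deg = "\<lambda>x. Amul A (natvec x)"
  assume ne: "?deg a \<noteq> ?deg b"
  then have "a \<noteq> b" by blast
  have "Poly_Mapping.keys (mon a - mon b) \<subseteq> {a, b}"
    using keys_diff[of "mon a" "mon b"] by auto
  then have "coeff_sum_of_degree ?deg (?deg a) (mon a - mon b) = 1"
    using ne \<open>a \<noteq> b\<close>
    by (auto simp: coeff_sum_of_degree_superset[of "{a, b}"] lookup_minus lookup_mon)
  moreover have "coeff_sum_of_degree ?deg (?deg a) (mon a - mon b) = 0"
    using assms unfolding toric_ideal_def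
    by (intro coeff_sum_of_degree_ideal_span_homogeneous_binomials)
      (simp_all add: Amul_natvec_add fun_eq_iff)
  ultimately show False by simp
qed

lemma standard_monomial_unique_in_fiber:
  assumes "generic_weight A w" and "Amul A (natvec x) = Amul A (natvec y)"
    and "mon x \<notin> init_ideal w (toric_ideal A)" and "mon y \<notin> init_ideal w (toric_ideal A)"
  shows "x = y"
proof (rule ccontr)
  let ?f = "mon x - mon y"
  assume "x \<noteq> y"
  then have "Poly_Mapping.lookup ?f x = 1"
    by (simp add: lookup_minus lookup_mon)
  then have "init_form w ?f \<noteq> 0"
    by (intro init_form_nonzero) auto
  then obtain z where z: "z \<in> Poly_Mapping.keys (init_form w ?f)"
    by fastforce
  have "?f \<in> toric_ideal A"
    using assms(2) unfolding toric_ideal_def by (intro ideal_span_base) blast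
  then have "init_form w ?f \<in> init_ideal w (toric_ideal A)"
    unfolding init_ideal_def by (intro ideal_span_base) blast
  then have "mon z \<in> init_ideal w (toric_ideal A)"
    using z assms(1) mon_key_in_monomial_ideal unfolding generic_weight_def by blast
  moreover have "z \<in> {x, y}"
    using z keys_init_form_subset keys_diff[of "mon x" "mon y"] by auto
  ultimately show False
    using assms(3,4) by blast
qed

lemma sum_lookup_eq_if_Amul_eq:
  fixes A :: "int^'n::finite^'d::finite" and h :: "'d \<Rightarrow> 'a::field_char_0"
  assumes "c \<noteq> 0" and "\<forall>j. (\<Sum>i\<in>UNIV. h i * of_int (A$i$j)) = c"
    and "Amul A (natvec x) = Amul A (natvec y)"
  shows "(\<Sum>j\<in>UNIV. Poly_Mapping.lookup x j) = (\<Sum>j\<in>UNIV. Poly_Mapping.lookup y j)"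
proof -
  have weighted: "(\<Sum>i\<in>UNIV. h i * of_int (Amul A (natvec z) i))
      = c * of_nat (\<Sum>j\<in>UNIV. Poly_Mapping.lookup z j)" for z
  proof -
    have "(\<Sum>i\<in>UNIV. h i * of_int (Amul A (natvec z) i))
        = (\<Sum>i\<in>UNIV. \<Sum>j\<in>UNIV. h i * of_int (A$i$j) * of_nat (Poly_Mapping.lookup z j))"
      by (simp add: Amul_def natvec_def sum_distrib_left mult.assoc)
    also have "\<dots> = (\<Sum>j\<in>UNIV. \<Sum>i\<in>UNIV. h i * of_int (A$i$j) * of_nat (Poly_Mapping.lookup z j))"
      by (rule sum.swap)
    also have "\<dots> = c * of_nat (\<Sum>j\<in>UNIV. Poly_Mapping.lookup z j)"
      using assms(2) by (simp add: sum_distrib_left sum_distrib_right[symmetric])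
    finally show ?thesis .
  qed
  have "c * of_nat (\<Sum>j\<in>UNIV. Poly_Mapping.lookup x j)
      = c * of_nat (\<Sum>j\<in>UNIV. Poly_Mapping.lookup y j)"
    by (simp only: weighted[symmetric] assms(3))
  then have "(of_nat (\<Sum>j\<in>UNIV. Poly_Mapping.lookup x j) :: 'a)
      = of_nat (\<Sum>j\<in>UNIV. Poly_Mapping.lookup y j)"
    using assms(1) by (simp only: mult_cancel_left) simp
  then show ?thesis
    by (simp only: of_nat_eq_iff)
qed

lemma finite_lookup_bounded:
  "finite {x :: 'n::finite \<Rightarrow>\<^sub>0 nat. \<forall>j. Poly_Mapping.lookup x j \<le> B}"
proof (rule finite_imageD)
  have "Poly_Mapping.lookup ` {x. \<forall>j. Poly_Mapping.lookup x j \<le> B} \<subseteq> Pi\<^sub>E UNIV (\<lambda>_. {..B})"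
    by auto
  then show "finite (Poly_Mapping.lookup ` {x :: 'n \<Rightarrow>\<^sub>0 nat. \<forall>j. Poly_Mapping.lookup x j \<le> B})"
    by (rule finite_subset) (intro finite_PiE; simp)
qed (simp add: inj_on_def)

lemma finite_Amul_fiber:
  fixes A :: "int^'n::finite^'d::finite" and h :: "'d \<Rightarrow> 'a::field_char_0"
  assumes "c \<noteq> 0" and "\<forall>j. (\<Sum>i\<in>UNIV. h i * of_int (A$i$j)) = c"
  shows "finite {x. Amul A (natvec x) = Amul A (natvec y)}"
proof (rule finite_subset[OF _ finite_lookup_bounded])
  show "{x. Amul A (natvec x) = Amul A (natvec y)}
      \<subseteq> {x. \<forall>j. Poly_Mapping.lookup x j \<le> (\<Sum>k\<in>UNIV. Poly_Mapping.lookup y k)}"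
  proof (intro subsetI CollectI allI)
    fix x j
    assume "x \<in> {x. Amul A (natvec x) = Amul A (natvec y)}"
    then have "(\<Sum>k\<in>UNIV. Poly_Mapping.lookup x k) = (\<Sum>k\<in>UNIV. Poly_Mapping.lookup y k)"
      using sum_lookup_eq_if_Amul_eq[OF assms] by blast
    moreover have "Poly_Mapping.lookup x j \<le> (\<Sum>k\<in>UNIV. Poly_Mapping.lookup x k)"
      by (rule member_le_sum) auto
    ultimately show "Poly_Mapping.lookup x j \<le> (\<Sum>k\<in>UNIV. Poly_Mapping.lookup y k)"
      by simp
  qed
qed

lemma standard_pair_avoiding:
  fixes a0 :: "'n::finite \<Rightarrow>\<^sub>0 nat"
  assumes "mon a0 \<notin> ideal_span S" and "mon (a0 + Poly_Mapping.single j 1) \<in> ideal_span S"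
  shows "\<exists>a \<sigma>. standard_pair (ideal_span S) a \<sigma> \<and> j \<notin> \<sigma>"
proof -
  let ?M = "ideal_span S"
  define restr where
    "restr \<sigma> = Abs_poly_mapping (\<lambda>k. if k \<in> \<sigma> then 0 else Poly_Mapping.lookup a0 k)"
    for \<sigma> :: "'n set"
  have lookup_restr:
    "Poly_Mapping.lookup (restr \<sigma>) k = (if k \<in> \<sigma> then 0 else Poly_Mapping.lookup a0 k)" for \<sigma> k
    by (simp add: restr_def)
  \<comment> \<open>A maximal set of variables, avoiding j, along which a0 with these coordinates erased
    stays standard.\<close>
  define Fam where "Fam = {\<sigma>. j \<notin> \<sigma> \<and>
      (\<forall>b. (\<forall>k. k \<notin> \<sigma> \<longrightarrow> Poly_Mapping.lookup b k = 0) \<longrightarrow> mon (restr \<sigma> + b) \<notin> ?M)}"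
  have "restr {} + b = a0" if "\<forall>k. k \<notin> {} \<longrightarrow> Poly_Mapping.lookup b k = 0" for b
    using that by (intro poly_mapping_eqI) (simp add: lookup_add lookup_restr)
  then have "{} \<in> Fam"
    using assms(1) by (auto simp: Fam_def)
  moreover have "finite Fam"
    by simp
  ultimately obtain \<sigma> where "\<sigma> \<in> Fam" and maximal: "\<forall>\<tau>\<in>Fam. \<sigma> \<subseteq> \<tau> \<longrightarrow> \<sigma> = \<tau>"
    using finite_has_maximal[of Fam] by blast
  then have j: "j \<notin> \<sigma>"
    and standard: "\<And>b. \<forall>k. k \<notin> \<sigma> \<longrightarrow> Poly_Mapping.lookup b k = 0 \<Longrightarrow> mon (restr \<sigma> + b) \<notin> ?M"
    by (auto simp: Fam_def)
  have "standard_pair ?M (restr \<sigma>) \<sigma>"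
    unfolding standard_pair_def
  proof (intro conjI allI impI ballI)
    fix i assume "i \<in> \<sigma>"
    then show "Poly_Mapping.lookup (restr \<sigma>) i = 0"
      by (simp add: lookup_restr)
  next
    fix b :: "'n \<Rightarrow>\<^sub>0 nat" assume "\<forall>k. k \<notin> \<sigma> \<longrightarrow> Poly_Mapping.lookup b k = 0"
    then show "mon (restr \<sigma> + b) \<notin> ?M"
      by (rule standard)
  next
    fix l assume l: "l \<notin> \<sigma>"
    show "\<exists>b. (\<forall>k. k \<notin> insert l \<sigma> \<longrightarrow> Poly_Mapping.lookup b k = 0) \<and> mon (restr \<sigma> + b) \<in> ?M"
    proof (cases "l = j")
      case True
      define b where "b = (a0 - restr \<sigma>) + Poly_Mapping.single j 1"
      have "restr \<sigma> + b = a0 + Poly_Mapping.single j 1"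
        by (intro poly_mapping_eqI) (simp add: b_def lookup_add lookup_minus lookup_restr)
      moreover have "\<forall>k. k \<notin> insert l \<sigma> \<longrightarrow> Poly_Mapping.lookup b k = 0"
        using True by (simp add: b_def lookup_add lookup_minus lookup_restr lookup_single when_def)
      ultimately show ?thesis
        using assms(2) by metis
    next
      case False
      then have "insert l \<sigma> \<notin> Fam"
        using maximal l by blast
      then obtain b where b: "\<forall>k. k \<notin> insert l \<sigma> \<longrightarrow> Poly_Mapping.lookup b k = 0"
        and in_M: "mon (restr (insert l \<sigma>) + b) \<in> ?M"
        using j False by (auto simp: Fam_def)
      have "restr \<sigma> + b
          = Poly_Mapping.single l (Poly_Mapping.lookup a0 l) + (restr (insert l \<sigma>) + b)"
        using l by (intro poly_mapping_eqI)
          (auto simp: lookup_add lookup_restr lookup_single when_def)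
      then have "mon (restr \<sigma> + b) \<in> ?M"
        using mon_add_in_ideal_span[OF in_M] by metis
      with b show ?thesis
        by blast
    qed
  qed
  with j show ?thesis
    by blast
qed

lemma Amul_diff: "Amul A (\<lambda>j. x j - y j) i = Amul A x i - Amul A y i"
  by (simp add: Amul_def right_diff_distrib sum_subtractf)

lemma natvec_diff_in_lattice_iff:
  "(\<lambda>j. natvec a j - natvec b j) \<in> lattice A \<longleftrightarrow> Amul A (natvec a) = Amul A (natvec b)"
  by (auto simp: lattice_def Amul_diff fun_eq_iff)

lemma natvec_Abs_poly_mapping_nat:
  fixes f :: "'n::finite \<Rightarrow> int"
  assumes "\<And>j. 0 \<le> f j"
  shows "natvec (Abs_poly_mapping (\<lambda>j. nat (f j))) = f"
  using assms by (simp add: natvec_def fun_eq_iff)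

lemma pos_part_nonneg: "0 \<le> pos_part u j"
  by (simp add: pos_part_def)

lemma neg_part_nonneg: "0 \<le> neg_part u j"
  by (simp add: neg_part_def)

lemma pos_part_minus_neg_part: "pos_part u j - neg_part u j = u j"
  by (simp add: pos_part_def neg_part_def)

lemma dotw_pos_part_minus_neg_part: "dotw (pos_part u) w - dotw (neg_part u) w = dotw u w"
  unfolding dotw_def sum_subtractf[symmetric] left_diff_distrib[symmetric] of_int_diff[symmetric]
  by (simp only: pos_part_minus_neg_part)

lemma dotw_natvec_diff: "dotw (\<lambda>j. natvec a j - natvec b j) w = wt w a - wt w b"
  by (simp add: dotw_def wt_def natvec_def sum_subtractf[symmetric] algebra_simps)

lemma ffact_eq_0_iff: "ffact v u = 0 \<longleftrightarrow> (\<exists>j. \<exists>k<nat (u j). v j = of_nat k)"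
  by (auto simp: ffact_def)

lemma Iu_zero: "Iu v (\<lambda>_. 0) = nsupp v"
  by (simp add: Iu_def)

lemma in_Iu_if_nonpos:
  assumes "j \<in> nsupp v" and "u j \<le> 0"
  shows "j \<in> Iu v u"
proof -
  obtain k where "k < 0" "v j = of_int k"
    using assms(1) unfolding nsupp_def by blast
  with assms(2) show ?thesis
    unfolding Iu_def nsupp_def by (intro CollectI exI[of _ "k + u j"]) simp
qed

lemma in_Iu_if_nat_below: "v j = of_nat k \<Longrightarrow> int k < - u j \<Longrightarrow> j \<in> Iu v u"
  unfolding Iu_def nsupp_def by (intro CollectI exI[of _ "int k + u j"]) simp

lemma of_nat_notin_nsupp:
  assumes "v j = of_nat k"
  shows "j \<notin> nsupp v"
proof
  assume "j \<in> nsupp v"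
  then obtain k' where "k' < 0" and "of_int (int k) = (of_int k' :: complex)"
    using assms unfolding nsupp_def by auto
  then show False
    unfolding of_int_eq_iff by simp
qed

lemma zero_in_lattice: "(\<lambda>_. 0) \<in> lattice A"
  by (simp add: lattice_def Amul_def)

lemma zero_in_Ccone: "(\<lambda>_. 0) \<in> Ccone m gp gm"
  unfolding Ccone_def by (auto intro!: exI[of _ "\<lambda>_. 0"])

lemma Ccone_add_generator:
  assumes "c \<in> Ccone m gp gm" and "i < m"
  shows "(\<lambda>j. c j + (natvec (gp i) j - natvec (gm i) j)) \<in> Ccone m gp gm"
proof -
  obtain n where c: "c = (\<lambda>j. \<Sum>i<m. int (n i) * (natvec (gp i) j - natvec (gm i) j))"
    using assms(1) unfolding Ccone_def by blast
  have "int ((n(i := Suc (n i))) i') * (natvec (gp i') j - natvec (gm i') j)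
      = int (n i') * (natvec (gp i') j - natvec (gm i') j)
        + (if i' = i then natvec (gp i') j - natvec (gm i') j else 0)" for i' j
    by (simp add: algebra_simps)
  then have "(\<lambda>j. c j + (natvec (gp i) j - natvec (gm i) j))
      = (\<lambda>j. \<Sum>i'<m. int ((n(i := Suc (n i))) i') * (natvec (gp i') j - natvec (gm i') j))"
    using assms(2) by (simp add: c sum.distrib)
  then show ?thesis
    unfolding Ccone_def by blast
qed

lemma Ccone_nonpos:
  assumes "\<And>i. i < m \<Longrightarrow> Poly_Mapping.lookup (gp i) j = 0" and "u \<in> Ccone m gp gm"
  shows "u j \<le> 0"
  using assms unfolding Ccone_def
  by (auto simp: natvec_def intro!: sum_nonpos mult_nonneg_nonpos)

locale toric_reduced_GB =
  fixes A :: "int^'n::finite^'d::finite"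
    and w :: "'n \<Rightarrow> real"
    and m :: nat
    and gp gm :: "nat \<Rightarrow> ('n \<Rightarrow>\<^sub>0 nat)"
  assumes GB: "reduced_GB w (toric_ideal A) ((\<lambda>i. mon (gp i) - mon (gm i)) ` {..<m})"
begin

abbreviation in_w :: "'n cpoly set" where
  "in_w \<equiv> init_ideal w (toric_ideal A)"

lemma init_form_GB_element:
  assumes "i < m"
  shows "init_form w (mon (gp i) - mon (gm i)) = mon (gp i)" and "wt w (gm i) < wt w (gp i)"
proof -
  obtain a where "init_form w (mon (gp i) - mon (gm i)) = mon a"
    using GB assms unfolding reduced_GB_def by blast
  then show "init_form w (mon (gp i) - mon (gm i)) = mon (gp i)" and "wt w (gm i) < wt w (gp i)"
    using init_form_binomial_eq_mon by metis+
qed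

lemma in_w_eq_ideal_span_leading: "in_w = ideal_span (mon ` gp ` {..<m})"
proof -
  have "init_form w ` (\<lambda>i. mon (gp i) - mon (gm i)) ` {..<m} = mon ` gp ` {..<m}"
    unfolding image_image by (rule image_cong) (simp_all add: init_form_GB_element(1))
  then show ?thesis
    using GB unfolding reduced_GB_def by simp
qed

lemma mon_in_in_w_iff: "mon x \<in> in_w \<longleftrightarrow> (\<exists>i<m. \<exists>y. x = y + gp i)"
  by (auto simp: in_w_eq_ideal_span_leading mon_in_ideal_span_mon_iff)

lemma Amul_gp_eq_Amul_gm: "i < m \<Longrightarrow> Amul A (natvec (gp i)) = Amul A (natvec (gm i))"
  using GB unfolding reduced_GB_def by (blast intro: toric_binomial_Amul_eq)

lemma leading_monomials_minimal:
  assumes "i < m" and "i' < m" and "gp i = y + gp i'"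
  shows "gp i = gp i'"
proof (rule ccontr)
  let ?g = "\<lambda>i. mon (gp i) - mon (gm i)"
  assume "gp i \<noteq> gp i'"
  have "?g i \<noteq> ?g i'"
  proof
    assume "?g i = ?g i'"
    then have "mon (gp i) = mon (gp i')"
      using init_form_GB_element(1)[OF assms(1)] init_form_GB_element(1)[OF assms(2)] by metis
    then have "Poly_Mapping.keys (mon (gp i)) = Poly_Mapping.keys (mon (gp i'))"
      by (rule arg_cong)
    with \<open>gp i \<noteq> gp i'\<close> show False
      by simp
  qed
  moreover have "init_form w (?g i) = mon y * mon (gp i')"
    using init_form_GB_element(1)[OF assms(1)] assms(3) mon_add by metis
  then have "init_form w (?g i') dvd init_form w (?g i)"
    by (simp add: init_form_GB_element(1)[OF assms(2)])
  ultimately show False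
    using GB assms(1,2) unfolding reduced_GB_def by blast
qed

lemma lookup_leading_eq_0_if_in_C_w:
  assumes "j \<in> C_w A w" and "i < m"
  shows "Poly_Mapping.lookup (gp i) j = 0"
proof (rule ccontr)
  assume "Poly_Mapping.lookup (gp i) j \<noteq> 0"
  define a0 where "a0 = gp i - Poly_Mapping.single j 1"
  have gp_eq: "gp i = a0 + Poly_Mapping.single j 1"
    using \<open>Poly_Mapping.lookup (gp i) j \<noteq> 0\<close>
    by (intro poly_mapping_eqI) (auto simp: a0_def lookup_add lookup_minus lookup_single when_def)
  have "mon a0 \<notin> in_w"
  proof
    assume "mon a0 \<in> in_w"
    then obtain i' y where "i' < m" and a0: "a0 = y + gp i'"
      by (auto simp: mon_in_in_w_iff)
    then have "gp i = (y + Poly_Mapping.single j 1) + gp i'"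
      using gp_eq by (simp add: ac_simps)
    then have "gp i = gp i'"
      using leading_monomials_minimal assms(2) \<open>i' < m\<close> by blast
    then show False
      using gp_eq a0 by (auto simp: poly_mapping_eq_iff fun_eq_iff lookup_add dest: spec[of _ j])
  qed
  moreover have "mon (a0 + Poly_Mapping.single j 1) \<in> in_w"
    using assms(2) gp_eq by (auto simp: mon_in_in_w_iff)
  ultimately obtain a \<sigma> where "standard_pair in_w a \<sigma>" and "j \<notin> \<sigma>"
    using standard_pair_avoiding in_w_eq_ideal_span_leading by metis
  then show False
    using assms(1) unfolding C_w_def Delta_w_def by blast
qed

lemma Ccone_nonpos_on_C_w: "j \<in> C_w A w \<Longrightarrow> u \<in> Ccone m gp gm \<Longrightarrow> u j \<le> 0"
  by (rule Ccone_nonpos) (auto intro: lookup_leading_eq_0_if_in_C_w)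

lemma fake_exponent_nat_coordinate_below:
  assumes "fake_exponent A \<beta> w v" and "mon N \<in> in_w"
  shows "\<exists>j. \<exists>k<Poly_Mapping.lookup N j. v j = of_nat k"
proof -
  obtain i y where i: "i < m" and N: "N = y + gp i"
    using assms(2) by (auto simp: mon_in_in_w_iff)
  define d where "d = (\<lambda>j. natvec (gp i) j - natvec (gm i) j)"
  have "d \<in> lattice A"
    using Amul_gp_eq_Amul_gm[OF i] by (simp add: d_def natvec_diff_in_lattice_iff)
  moreover have "dotw (pos_part d) w > dotw (neg_part d) w"
    using dotw_pos_part_minus_neg_part[of d w] dotw_natvec_diff[of "gp i" "gm i" w]
      init_form_GB_element(2)[OF i]
    by (simp add: d_def)
  ultimately have "ffact v (pos_part d) = 0"
    using assms(1) unfolding fake_exponent_def by blast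
  then obtain j k where "k < nat (pos_part d j)" and "v j = of_nat k"
    by (auto simp: ffact_eq_0_iff)
  moreover have "nat (pos_part d j) \<le> Poly_Mapping.lookup N j"
    by (simp add: d_def pos_part_def natvec_def N lookup_add)
  ultimately show ?thesis
    by (meson less_le_trans)
qed

lemma exists_standard_Ccone_reduction:
  fixes h :: "'d \<Rightarrow> 'a::field_char_0"
  assumes "c \<noteq> 0" and "\<forall>j. (\<Sum>i\<in>UNIV. h i * of_int (A$i$j)) = c"
  shows "\<exists>x. mon x \<notin> in_w \<and> Amul A (natvec x) = Amul A (natvec P)
    \<and> (\<lambda>j. natvec P j - natvec x j) \<in> Ccone m gp gm"
proof -
  define S where "S = {x. Amul A (natvec x) = Amul A (natvec P)
    \<and> (\<lambda>j. natvec P j - natvec x j) \<in> Ccone m gp gm}"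
  have "finite S"
    using finite_Amul_fiber[OF assms, of P] by (rule finite_subset[rotated]) (auto simp: S_def)
  moreover have "P \<in> S"
    using zero_in_Ccone by (simp add: S_def)
  ultimately obtain x where "x \<in> S" and x_min: "\<And>x'. x' \<in> S \<Longrightarrow> \<not> wt w x' < wt w x"
    using ex_is_arg_min_if_finite[of S "wt w"] unfolding is_arg_min_def by blast
  \<comment> \<open>Replacing a leading monomial by the trailing one lowers the weight without leaving S.\<close>
  have "mon x \<notin> in_w"
  proof
    assume "mon x \<in> in_w"
    then obtain i y where i: "i < m" and x: "x = y + gp i"
      by (auto simp: mon_in_in_w_iff)
    have "Amul A (natvec (y + gm i)) = Amul A (natvec x)"
      using Amul_gp_eq_Amul_gm[OF i] by (simp add: fun_eq_iff x Amul_natvec_add)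
    moreover have "(\<lambda>j. natvec P j - natvec (y + gm i) j)
        = (\<lambda>j. (natvec P j - natvec x j) + (natvec (gp i) j - natvec (gm i) j))"
      by (simp add: x natvec_def lookup_add fun_eq_iff)
    moreover have
      "(\<lambda>j. (natvec P j - natvec x j) + (natvec (gp i) j - natvec (gm i) j)) \<in> Ccone m gp gm"
      using \<open>x \<in> S\<close> i by (intro Ccone_add_generator) (simp_all add: S_def)
    ultimately have "y + gm i \<in> S"
      using \<open>x \<in> S\<close> by (simp add: S_def)
    moreover have "wt w (y + gm i) < wt w x"
      using init_form_GB_element(2)[OF i] by (simp add: x wt_add)
    ultimately show False
      using x_min by blast
  qed
  with \<open>x \<in> S\<close> show ?thesis
    by (auto simp: S_def)
qed

lemma lattice_in_Ccone_if_neg_part_standard: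
  fixes h :: "'d \<Rightarrow> 'a::field_char_0"
  assumes "c \<noteq> 0" and "\<forall>j. (\<Sum>i\<in>UNIV. h i * of_int (A$i$j)) = c" and "generic_weight A w"
    and "u \<in> lattice A" and "mon (Abs_poly_mapping (\<lambda>j. nat (neg_part u j))) \<notin> in_w"
  shows "u \<in> Ccone m gp gm"
proof -
  define P where "P = Abs_poly_mapping (\<lambda>j. nat (pos_part u j))"
  define N where "N = Abs_poly_mapping (\<lambda>j. nat (neg_part u j))"
  have "natvec P = pos_part u" and "natvec N = neg_part u"
    by (simp_all add: P_def N_def natvec_Abs_poly_mapping_nat pos_part_nonneg neg_part_nonneg)
  then have u: "u = (\<lambda>j. natvec P j - natvec N j)"
    by (simp add: pos_part_minus_neg_part)
  then have "Amul A (natvec P) = Amul A (natvec N)"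
    using assms(4) natvec_diff_in_lattice_iff by metis
  obtain x where "mon x \<notin> in_w" and "Amul A (natvec x) = Amul A (natvec P)"
    and "(\<lambda>j. natvec P j - natvec x j) \<in> Ccone m gp gm"
    using exists_standard_Ccone_reduction[OF assms(1,2)] by blast
  moreover have "x = N"
    using standard_monomial_unique_in_fiber assms(3,5) calculation(1,2)
      \<open>Amul A (natvec P) = Amul A (natvec N)\<close>
    unfolding N_def by metis
  ultimately show ?thesis
    using u by simp
qed

lemma lattice_in_Ccone_if_Iu_eq_nsupp:
  fixes h :: "'d \<Rightarrow> 'a::field_char_0"
  assumes "c \<noteq> 0" and "\<forall>j. (\<Sum>i\<in>UNIV. h i * of_int (A$i$j)) = c" and "generic_weight A w"
    and "fake_exponent A \<beta> w v" and "u \<in> lattice A" and "Iu v u = nsupp v"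
  shows "u \<in> Ccone m gp gm"
proof (rule lattice_in_Ccone_if_neg_part_standard[OF assms(1-3,5)])
  let ?N = "Abs_poly_mapping (\<lambda>j. nat (neg_part u j))"
  show "mon ?N \<notin> in_w"
  proof
    assume "mon ?N \<in> in_w"
    then obtain j k where "k < Poly_Mapping.lookup ?N j" and v: "v j = of_nat k"
      using fake_exponent_nat_coordinate_below[OF assms(4)] by blast
    then have "int k < - u j"
      by (simp add: neg_part_def)
    then have "j \<in> nsupp v"
      using in_Iu_if_nat_below[of v j k u] v assms(6) by blast
    then show False
      using of_nat_notin_nsupp[of v j k] v by blast
  qed
qed

end

theorem theorem3p1:
  fixes A :: "int^'n::finite^'d::finite"
    and w :: "'n \<Rightarrow> real"
    and \<beta> :: "'d \<Rightarrow> complex"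
    and v :: "'n \<Rightarrow> complex"
    and m :: nat
    and gp gm :: "nat \<Rightarrow> ('n \<Rightarrow>\<^sub>0 nat)"
  assumes rank: "rank (\<chi> i j. (of_int (A$i$j) :: rat)) = CARD('d)"
    and hyperplane: "\<exists>h :: 'd \<Rightarrow> rat. \<exists>c :: rat. c \<noteq> 0 \<and>
                       (\<forall>j. (\<Sum>i\<in>UNIV. h i * of_int (A$i$j)) = c)"
    and generic: "generic_weight A w"
    and GB: "reduced_GB w (toric_ideal A) ((\<lambda>i. mon (gp i) - mon (gm i)) ` {..<m})"
    and GB_lead: "\<forall>i<m. mon (gp i) \<in> init_ideal w (toric_ideal A)"
    and fake: "fake_exponent A \<beta> w v"
    and sub: "nsupp v \<subseteq> C_w A w"
  shows "nsupp v = Kset A v (Ccone m gp gm)"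
proof -
  interpret toric_reduced_GB A w m gp gm
    by standard (rule GB)
  obtain h :: "'d \<Rightarrow> rat" and c where c: "c \<noteq> 0" and h: "\<forall>j. (\<Sum>i\<in>UNIV. h i * of_int (A$i$j)) = c"
    using hyperplane by blast
  have "nsupp v \<in> NS A v (Ccone m gp gm)"
  proof -
    have "\<forall>u\<in>lattice A. Iu v u = nsupp v \<longrightarrow> u \<in> Ccone m gp gm"
      using lattice_in_Ccone_if_Iu_eq_nsupp[OF c h generic fake] by blast
    then show ?thesis
      unfolding NS_def by (intro CollectI exI[of _ "\<lambda>_. 0"]) (simp add: Iu_zero zero_in_lattice)
  qed
  moreover have "nsupp v \<subseteq> I" if I_in: "I \<in> NS A v (Ccone m gp gm)" for I
  proof -
    obtain u where I: "I = Iu v u" and "u \<in> lattice A"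
      and "\<forall>u'\<in>lattice A. Iu v u' = Iu v u \<longrightarrow> u' \<in> Ccone m gp gm"
      using I_in unfolding NS_def by blast
    then have "u \<in> Ccone m gp gm"
      by blast
    then show ?thesis
      unfolding I using sub by (auto intro: in_Iu_if_nonpos Ccone_nonpos_on_C_w)
  qed
  ultimately show ?thesis
    unfolding Kset_def by blast
qed

end
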